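(* Let $m\ge 1$ and let $G$ be any co-bipartite graph $\overline{B(K_m,K_2)}$, i.e. any graph whose vertex set is the disjoint union of a clique $K_m$ on $m$ vertices and a clique $K_2$ on $2$ vertices, with an arbitrary set of edges between $V(K_m)$ and $V(K_2)$. Then $G$ is word-representable.
   Context: A graph $G=(V,E)$ is word-representable if there exists a word $w$ over the alphabet $V$, containing every letter of $V$ at least once, such that for all distinct $x,y\in V$, the letters $x$ and $y$ alternate in $w$ (i.e., the subword of $w$ obtained by deleting all letters other than $x,y$ has no two equal consecutive letters) if and only if $xy\in E$. $\overline{B(K_m,K_n)}$ denotes a co-bipartite graph whose vertex set is partitioned into two cliques $K_m$ and $K_n$ of sizes $m$ and $n$, with arbitrary edges between the two cliques. *)

theory Defs
  imports Main
begin

definition simple_graph :: "'a set \<Rightarrow> ('a \<Rightarrow> 'a \<Rightarrow> bool) \<Rightarrow> bool" where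
  "simple_graph V E \<longleftrightarrow> finite V \<and> (\<forall>x y. E x y \<longrightarrow> x \<in> V \<and> y \<in> V)
     \<and> (\<forall>x y. E x y \<longrightarrow> E y x) \<and> (\<forall>x. \<not> E x x)"

definition alternate :: "'a list \<Rightarrow> 'a \<Rightarrow> 'a \<Rightarrow> bool" where
  "alternate w x y \<longleftrightarrow>
     (let u = filter (\<lambda>z. z = x \<or> z = y) w in
      \<forall>i. Suc i < length u \<longrightarrow> u ! i \<noteq> u ! Suc i)"

definition word_representable :: "'a set \<Rightarrow> ('a \<Rightarrow> 'a \<Rightarrow> bool) \<Rightarrow> bool" where
  "word_representable V E \<longleftrightarrow>
     (\<exists>w. set w = V \<and>
          (\<forall>x\<in>V. \<forall>y\<in>V. x \<noteq> y \<longrightarrow> (alternate w x y \<longleftrightarrow> E x y)))"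

end

theory Submission
  imports Defs
begin

text \<open>Write \<open>B = {b\<^sub>1, b\<^sub>2}\<close> and split an enumeration of the clique \<open>A\<close> into
  four blocks \<open>Q\<^sub>p\<^sub>q\<close> according to the truth values \<open>(p, q)\<close> of
  \<open>(E a b\<^sub>1, E a b\<^sub>2)\<close>. In the word
  \<open>b\<^sub>1 Q\<^sub>F\<^sub>T b\<^sub>2 Q\<^sub>F\<^sub>F Q\<^sub>T\<^sub>F Q\<^sub>T\<^sub>T Q\<^sub>F\<^sub>T Q\<^sub>F\<^sub>F b\<^sub>1 Q\<^sub>T\<^sub>F b\<^sub>2 Q\<^sub>T\<^sub>T\<close>
  the letters of \<open>A\<close> form a square \<open>R R\<close> of a permutation \<open>R\<close> of \<open>A\<close>, so any two
  of them alternate, and \<open>b\<^sub>1, b\<^sub>2\<close> alternate as well. The two occurrences of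
  \<open>a \<in> Q\<^sub>p\<^sub>q\<close> are separated by a copy of \<open>b\<^sub>1\<close> exactly when \<open>p\<close> holds and by a
  copy of \<open>b\<^sub>2\<close> exactly when \<open>q\<close> holds; otherwise both lie between the two copies
  of that letter.\<close>

lemma alternate_iff_distinct_adj:
  "alternate w x y \<longleftrightarrow> distinct_adj (filter (\<lambda>z. z = x \<or> z = y) w)"
  by (simp add: alternate_def distinct_adj_conv_nth Let_def)

lemma alternate_commute: "alternate w x y \<longleftrightarrow> alternate w y x"
  unfolding alternate_iff_distinct_adj by (simp only: disj_commute)

lemma filter_eq_singleton_if_distinct:
  assumes "distinct xs" "x \<in> set xs"
  shows "filter (\<lambda>z. z = x) xs = [x]"
  using assms by (induction xs) (auto simp: filter_empty_conv)

lemma filter_pair_filter: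
  assumes "distinct xs" "x \<in> set xs" "y \<notin> set xs"
  shows "filter (\<lambda>z. z = x \<or> z = y) (filter P xs) = (if P x then [x] else [])"
proof -
  have "filter (\<lambda>z. z = x \<or> z = y) (filter P xs) = filter (\<lambda>z. z = x) (filter P xs)"
    using assms(3) by (auto intro: filter_cong)
  then show ?thesis
    using assms(1,2) filter_eq_singleton_if_distinct[of "filter P xs" x]
    by (auto simp: filter_empty_conv)
qed

lemma filter_pair_distinct:
  assumes "distinct xs" "x \<in> set xs" "y \<in> set xs" "x \<noteq> y"
  shows "filter (\<lambda>z. z = x \<or> z = y) xs \<in> {[x, y], [y, x]}"
proof -
  define u where "u = filter (\<lambda>z. z = x \<or> z = y) xs"
  have "distinct u" and set_u: "set u = {x, y}"
    using assms(1-3) by (auto simp: u_def)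
  then have "length u = 2"
    using assms(4) distinct_card by fastforce
  then obtain a c where u: "u = [a, c]"
    by (metis length_0_conv length_Suc_conv numeral_2_eq_2)
  with set_u have "{a, c} = {x, y}"
    by simp
  with u have "u \<in> {[x, y], [y, x]}"
    by (auto simp: doubleton_eq_iff)
  then show ?thesis
    unfolding u_def .
qed

lemma alternate_double_distinct:
  assumes "distinct xs" "x \<in> set xs" "y \<in> set xs" "x \<noteq> y"
  shows "alternate (xs @ xs) x y"
  using filter_pair_distinct[OF assms] assms(4)
  by (elim insertE emptyE) (simp_all add: alternate_iff_distinct_adj)

definition K2_block :: "('a \<Rightarrow> 'a \<Rightarrow> bool) \<Rightarrow> 'a \<Rightarrow> 'a \<Rightarrow> 'a list \<Rightarrow> bool \<Rightarrow> bool \<Rightarrow> 'a list" where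
  "K2_block E b\<^sub>1 b\<^sub>2 Q p q = filter (\<lambda>a. E a b\<^sub>1 = p \<and> E a b\<^sub>2 = q) Q"

definition K2_word :: "('a \<Rightarrow> 'a \<Rightarrow> bool) \<Rightarrow> 'a \<Rightarrow> 'a \<Rightarrow> 'a list \<Rightarrow> 'a list" where
  "K2_word E b\<^sub>1 b\<^sub>2 Q =
     (let B = K2_block E b\<^sub>1 b\<^sub>2 Q
      in [b\<^sub>1] @ B False True @ [b\<^sub>2] @ B False False @ B True False @ B True True
         @ B False True @ B False False @ [b\<^sub>1] @ B True False @ [b\<^sub>2] @ B True True)"

lemma set_K2_word: "set (K2_word E b\<^sub>1 b\<^sub>2 Q) = {b\<^sub>1, b\<^sub>2} \<union> set Q"
  by (auto simp: K2_word_def K2_block_def)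

context
  fixes E :: "'a \<Rightarrow> 'a \<Rightarrow> bool" and b\<^sub>1 b\<^sub>2 :: 'a and Q :: "'a list"
  assumes distinct_Q: "distinct Q"
    and b\<^sub>1_notin: "b\<^sub>1 \<notin> set Q" and b\<^sub>2_notin: "b\<^sub>2 \<notin> set Q"
begin

lemma K2_word_alternate_clique:
  assumes "x \<in> set Q" "y \<in> set Q" "x \<noteq> y"
  shows "alternate (K2_word E b\<^sub>1 b\<^sub>2 Q) x y"
proof -
  define R where "R = K2_block E b\<^sub>1 b\<^sub>2 Q False True @ K2_block E b\<^sub>1 b\<^sub>2 Q False False
    @ K2_block E b\<^sub>1 b\<^sub>2 Q True False @ K2_block E b\<^sub>1 b\<^sub>2 Q True True"
  have "set R = set Q"
    by (auto simp: R_def K2_block_def)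
  moreover have "distinct R"
    using distinct_Q by (auto simp: R_def K2_block_def)
  moreover have "filter (\<lambda>z. z = x \<or> z = y) (K2_word E b\<^sub>1 b\<^sub>2 Q)
      = filter (\<lambda>z. z = x \<or> z = y) (R @ R)"
    using assms b\<^sub>1_notin b\<^sub>2_notin
    by (auto simp: K2_word_def R_def Let_def)
  ultimately show ?thesis
    using alternate_double_distinct[of R x y] assms
    by (simp add: alternate_iff_distinct_adj)
qed

lemma K2_word_alternate_cross:
  assumes "a \<in> set Q" "b \<in> {b\<^sub>1, b\<^sub>2}" "b\<^sub>1 \<noteq> b\<^sub>2"
  shows "alternate (K2_word E b\<^sub>1 b\<^sub>2 Q) a b \<longleftrightarrow> E a b"
proof -
  have blocks: "filter (\<lambda>z. z = a \<or> z = b') (K2_block E b\<^sub>1 b\<^sub>2 Q p q)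
      = (if E a b\<^sub>1 = p \<and> E a b\<^sub>2 = q then [a] else [])" if "b' \<in> {b\<^sub>1, b\<^sub>2}" for b' p q
    using that b\<^sub>1_notin b\<^sub>2_notin unfolding K2_block_def
    by (intro filter_pair_filter[OF distinct_Q assms(1)]) blast
  have "a \<noteq> b\<^sub>1" "a \<noteq> b\<^sub>2"
    using assms(1) b\<^sub>1_notin b\<^sub>2_notin by auto
  then show ?thesis
    using assms(2,3) blocks[OF assms(2)]
    unfolding alternate_iff_distinct_adj K2_word_def Let_def filter_append
    by (cases "E a b\<^sub>1"; cases "E a b\<^sub>2"; elim insertE emptyE) simp_all
qed

lemma K2_word_alternate_pair:
  assumes "b\<^sub>1 \<noteq> b\<^sub>2"
  shows "alternate (K2_word E b\<^sub>1 b\<^sub>2 Q) b\<^sub>1 b\<^sub>2"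
proof -
  have "filter (\<lambda>z. z = b\<^sub>1 \<or> z = b\<^sub>2) (K2_block E b\<^sub>1 b\<^sub>2 Q p q) = []" for p q
    using b\<^sub>1_notin b\<^sub>2_notin by (auto simp: K2_block_def filter_empty_conv)
  then show ?thesis
    using assms by (simp add: alternate_iff_distinct_adj K2_word_def Let_def)
qed

lemma word_representable_K2_word:
  assumes "b\<^sub>1 \<noteq> b\<^sub>2" and E_sym: "\<And>x y. E x y \<Longrightarrow> E y x"
    and clique_Q: "\<forall>x\<in>set Q. \<forall>y\<in>set Q. x \<noteq> y \<longrightarrow> E x y" and "E b\<^sub>1 b\<^sub>2"
  shows "word_representable ({b\<^sub>1, b\<^sub>2} \<union> set Q) E"
  unfolding word_representable_def
proof (intro exI conjI ballI impI)
  show "set (K2_word E b\<^sub>1 b\<^sub>2 Q) = {b\<^sub>1, b\<^sub>2} \<union> set Q"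
    by (rule set_K2_word)
next
  fix x y
  assume "x \<in> {b\<^sub>1, b\<^sub>2} \<union> set Q" "y \<in> {b\<^sub>1, b\<^sub>2} \<union> set Q" "x \<noteq> y"
  then consider "x \<in> set Q" "y \<in> set Q" | "x \<in> set Q" "y \<in> {b\<^sub>1, b\<^sub>2}"
    | "x \<in> {b\<^sub>1, b\<^sub>2}" "y \<in> set Q" | "x = b\<^sub>1 \<and> y = b\<^sub>2 \<or> x = b\<^sub>2 \<and> y = b\<^sub>1"
    by blast
  then show "alternate (K2_word E b\<^sub>1 b\<^sub>2 Q) x y \<longleftrightarrow> E x y"
  proof cases
    case 1
    then show ?thesis
      using K2_word_alternate_clique clique_Q \<open>x \<noteq> y\<close> by blast
  next
    case 2
    then show ?thesis
      using K2_word_alternate_cross \<open>b\<^sub>1 \<noteq> b\<^sub>2\<close> by blast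
  next
    case 3
    have "alternate (K2_word E b\<^sub>1 b\<^sub>2 Q) x y \<longleftrightarrow> alternate (K2_word E b\<^sub>1 b\<^sub>2 Q) y x"
      by (rule alternate_commute)
    also have "\<dots> \<longleftrightarrow> E y x"
      using K2_word_alternate_cross 3 \<open>b\<^sub>1 \<noteq> b\<^sub>2\<close> by blast
    also have "\<dots> \<longleftrightarrow> E x y"
      using E_sym by blast
    finally show ?thesis .
  next
    case 4
    moreover have "alternate (K2_word E b\<^sub>1 b\<^sub>2 Q) b\<^sub>2 b\<^sub>1"
      using K2_word_alternate_pair[OF \<open>b\<^sub>1 \<noteq> b\<^sub>2\<close>] alternate_commute by metis
    ultimately show ?thesis
      using K2_word_alternate_pair[OF \<open>b\<^sub>1 \<noteq> b\<^sub>2\<close>] \<open>E b\<^sub>1 b\<^sub>2\<close> E_sym by blast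
  qed
qed

end

theorem mainTheorem8:
  fixes V A B :: "'a set" and E :: "'a \<Rightarrow> 'a \<Rightarrow> bool" and m :: nat
  assumes "simple_graph V E"
    and "m \<ge> 1" and "card A = m" and "card B = 2"
    and "A \<inter> B = {}" and "V = A \<union> B"
    and "\<forall>x\<in>A. \<forall>y\<in>A. x \<noteq> y \<longrightarrow> E x y"
    and "\<forall>x\<in>B. \<forall>y\<in>B. x \<noteq> y \<longrightarrow> E x y"
  shows "word_representable V E"
proof -
  obtain b\<^sub>1 b\<^sub>2 where B: "B = {b\<^sub>1, b\<^sub>2}" and "b\<^sub>1 \<noteq> b\<^sub>2"
    using assms(4) card_2_iff by metis
  have "finite A" and E_sym: "\<And>x y. E x y \<Longrightarrow> E y x"
    using assms(1,6) by (auto simp: simple_graph_def)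
  then obtain Q where "distinct Q" and set_Q: "set Q = A"
    using finite_distinct_list by blast
  have "b\<^sub>1 \<notin> set Q" "b\<^sub>2 \<notin> set Q" "E b\<^sub>1 b\<^sub>2"
    using assms(5,8) B set_Q \<open>b\<^sub>1 \<noteq> b\<^sub>2\<close> by auto
  moreover have "\<forall>x\<in>set Q. \<forall>y\<in>set Q. x \<noteq> y \<longrightarrow> E x y"
    using assms(7) set_Q by blast
  ultimately have "word_representable ({b\<^sub>1, b\<^sub>2} \<union> set Q) E"
    using word_representable_K2_word[of Q b\<^sub>1 b\<^sub>2 E] \<open>distinct Q\<close> \<open>b\<^sub>1 \<noteq> b\<^sub>2\<close> E_sym
    by blast
  moreover have "V = {b\<^sub>1, b\<^sub>2} \<union> set Q"
    using assms(6) B set_Q by blast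
  ultimately show ?thesis
    by simp
qed

end
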